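(* Let $\mathbf{u}$ be a $1$-balanced sequence over $\{a,b\}$, let $\mathbf{a}=1^{\omega}$ (the constant sequence $111\cdots$), and let $\mathbf{b}=b_0b_1b_2\cdots$ be a $1$-balanced sequence over $\{2,3\}$. Then the ternary sequence $\mathbf{v}=\mathrm{colour}(\mathbf{u},\mathbf{a},\mathbf{b})$ is $2$-balanced.
   Context: A sequence $\mathbf{u}$ over an alphabet $\mathcal A$ is $C$-balanced ($C\ge 1$ an integer) if for any two factors $u,v$ of $\mathbf{u}$ with $|u|=|v|$ and every letter $x\in\mathcal A$ we have $\bigl||u|_x-|v|_x\bigr|\le C$, where $|w|_x$ is the number of occurrences of $x$ in $w$. Colouring: given a sequence $\mathbf{u}$ over $\{a,b\}$ and sequences $\mathbf{a},\mathbf{b}$ over disjoint alphabets $\mathcal A,\mathcal B$, $\mathrm{colour}(\mathbf{u},\mathbf{a},\mathbf{b})$ is the sequence over $\mathcal A\cup\mathcal B$ obtained from $\mathbf{u}$ by replacing the subsequence of all occurrences of $a$ (in order) by the sequence $\mathbf{a}$ and the subsequence of all occurrences of $b$ (in order) by the sequence $\mathbf{b}$. *)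

theory Defs
  imports Main
begin

text \<open>Infinite sequences are functions nat => letter. The factor of length n starting
  at position i is w i, ..., w (i+n-1).\<close>

definition occ :: "(nat \<Rightarrow> 'a) \<Rightarrow> 'a \<Rightarrow> nat \<Rightarrow> nat \<Rightarrow> nat" where
  "occ w x i n = card {k. i \<le> k \<and> k < i + n \<and> w k = x}"

definition balanced :: "nat \<Rightarrow> (nat \<Rightarrow> 'a) \<Rightarrow> bool" where
  "balanced C w \<longleftrightarrow>
     (\<forall>i j n x. \<bar>int (occ w x i n) - int (occ w x j n)\<bar> \<le> int C)"

text \<open>colour u a b sa sb: the k-th occurrence of letter a in u is replaced by sa k,
  the k-th occurrence of letter b by sb k (counting from 0).\<close>
definition colour :: "(nat \<Rightarrow> 'a) \<Rightarrow> 'a \<Rightarrow> 'a \<Rightarrow> (nat \<Rightarrow> 'c) \<Rightarrow> (nat \<Rightarrow> 'c) \<Rightarrow> nat \<Rightarrow> 'c" where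
  "colour u a b sa sb n =
     (if u n = a then sa (card {k. k < n \<and> u k = a}) else sb (card {k. k < n \<and> u k = b}))"

end

theory Submission
  imports Defs
begin

text \<open>A factor of \<open>v = colour u a b 1\<^sup>\<omega> bs\<close> contains the letter 1 exactly as often as the
  corresponding factor of \<open>u\<close> contains \<open>a\<close>, so these counts differ by at most 1.
  Any other letter \<open>x\<close> occurs in a factor of \<open>v\<close> as often as in a factor of \<open>bs\<close> whose
  length is the number of \<open>b\<close>'s in the corresponding factor of \<open>u\<close>. By the balance of \<open>u\<close>
  two such lengths differ by at most one, and factors of a 1-balanced sequence whose lengths
  differ by at most one differ in every letter count by at most 2.\<close>

lemma occ_0 [simp]: "occ w x i 0 = 0"
  unfolding occ_def by simp

lemma occ_Suc: "occ w x i (Suc n) = occ w x i n + (if w (i + n) = x then 1 else 0)"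
proof -
  have "{k. i \<le> k \<and> k < i + Suc n \<and> w k = x} =
        (if w (i + n) = x then insert (i + n) else id) {k. i \<le> k \<and> k < i + n \<and> w k = x}"
    by (auto simp: less_Suc_eq)
  then show ?thesis
    unfolding occ_def by simp
qed

lemma occ_add: "occ w x i (m + n) = occ w x i m + occ w x (i + m) n"
  by (induction n) (simp_all add: occ_Suc add.assoc)

lemma occ_const [simp]: "occ (\<lambda>_. c) c i n = n"
  by (induction n) (simp_all add: occ_Suc)

lemma occ_le_occ_Suc: "occ w x i n \<le> occ w x i (Suc n)"
  and occ_Suc_le: "occ w x i (Suc n) \<le> occ w x i n + 1"
  by (simp_all add: occ_Suc)

lemma card_less_eq_occ: "card {k. k < n \<and> u k = a} = occ u a 0 n"
  unfolding occ_def by simp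

lemma balancedD: "balanced C w \<Longrightarrow> \<bar>int (occ w x i n) - int (occ w x j n)\<bar> \<le> int C"
  unfolding balanced_def by blast

lemma balanced_occ_diff_le_Suc:
  assumes "balanced C w" and "m' \<le> m + 1" and "m \<le> m' + 1"
  shows "\<bar>int (occ w x i m) - int (occ w x j m')\<bar> \<le> int C + 1"
proof -
  consider "m' = m" | "m' = Suc m" | "m = Suc m'"
    using assms(2,3) by linarith
  then show ?thesis
  proof cases
    case 1
    then show ?thesis using balancedD[OF assms(1), of x i m j] by simp
  next
    case 2
    then show ?thesis
      using balancedD[OF assms(1), of x i m j] occ_le_occ_Suc[of w x j m] occ_Suc_le[of w x j m]
      by simp
  next
    case 3
    then show ?thesis
      using balancedD[OF assms(1), of x i m' j] occ_le_occ_Suc[of w x i m'] occ_Suc_le[of w x i m']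
      by simp
  qed
qed

lemma colour_swap:
  assumes "\<forall>n. u n \<in> {a, b}" and "a \<noteq> b"
  shows "colour u a b sa sb = colour u b a sb sa"
  using assms unfolding colour_def by (fastforce intro!: ext)

lemma occ_colour_left:
  assumes "\<forall>n. u n \<in> {a, b}" and "a \<noteq> b" and "x \<notin> range sb"
  shows "occ (colour u a b sa sb) x i n = occ sa x (occ u a 0 i) (occ u a i n)"
proof (induction n)
  case (Suc n)
  have "occ u a 0 (i + n) = occ u a 0 i + occ u a i n"
    using occ_add[of u a 0 i n] by simp
  then show ?case
    using Suc assms by (auto simp: occ_Suc colour_def card_less_eq_occ)
qed simp

lemma occ_colour_right:
  assumes "\<forall>n. u n \<in> {a, b}" and "a \<noteq> b" and "x \<notin> range sa"
  shows "occ (colour u a b sa sb) x i n = occ sb x (occ u b 0 i) (occ u b i n)"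
proof -
  have "\<forall>n. u n \<in> {b, a}"
    using assms(1) by blast
  then show ?thesis
    using colour_swap[OF assms(1,2), of sa sb] occ_colour_left[of u b a x sa sb] assms(2,3) by simp
qed

theorem lemma1:
  fixes u :: "nat \<Rightarrow> 'a" and a b :: 'a and bs :: "nat \<Rightarrow> nat"
  assumes "a \<noteq> b"
    and "\<forall>n. u n \<in> {a, b}"
    and "balanced 1 u"
    and "\<forall>n. bs n \<in> {2, 3}"
    and "balanced 1 bs"
  shows "balanced 2 (colour u a b (\<lambda>_. 1::nat) bs)"
  unfolding balanced_def
proof (intro allI)
  fix i j n and x :: nat
  let ?v = "colour u a b (\<lambda>_. 1::nat) bs"
  show "\<bar>int (occ ?v x i n) - int (occ ?v x j n)\<bar> \<le> int 2"
  proof (cases "x = 1")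
    case True
    have "1 \<notin> range bs"
    proof
      assume "1 \<in> range bs"
      then obtain k where "bs k = 1" by auto
      moreover have "bs k = 2 \<or> bs k = 3" using assms(4) by blast
      ultimately show False by simp
    qed
    then have "occ ?v 1 k m = occ u a k m" for k m
      using occ_colour_left[OF assms(2,1), of 1 bs "\<lambda>_. 1"] by simp
    then show ?thesis
      using True balancedD[OF assms(3), of a i n j] by simp
  next
    case False
    then have "occ ?v x k m = occ bs x (occ u b 0 k) (occ u b k m)" for k m
      using occ_colour_right[OF assms(2,1), of x "\<lambda>_. 1"] by simp
    moreover have "\<bar>int (occ u b i n) - int (occ u b j n)\<bar> \<le> 1"
      using balancedD[OF assms(3)] by simp
    ultimately show ?thesis
      using balanced_occ_diff_le_Suc[OF assms(5), of "occ u b j n" "occ u b i n"] by simp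
  qed
qed

end
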